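(* Let $\mathcal{L}$ and $\mathcal{K}$ be $2$-categories with pseudolimits of arrows, and let $U\colon\mathcal{L}\to\mathcal{K}$ be a $2$-functor preserving pseudolimits of arrows. Then $U$ preserves equivalences, injective equivalences, retract equivalences, normal retract equivalences, representable isofibrations, and normal isofibrations.
   Context: An equivalence is a morphism $f\colon A\to B$ with $g\colon B\to A$ and invertible $2$-cells $1\cong gf$, $fg\cong 1$; an injective equivalence is an equivalence with a retraction; a retract equivalence is an equivalence with a section; a normal retract equivalence is a retract equivalence which is also a normal isofibration. The pseudolimit of an arrow $f\colon A\to B$ is an object $L_f$ with $u_f\colon L_f\to A$, $v_f\colon L_f\to B$ and invertible $\lambda_f\colon v_f\cong fu_f$, universal among such data; $U$ preserves it if $(UL_f,Uu_f,Uv_f,U\lambda_f)$ is a pseudolimit of $Uf$. A morphism $f\colon A\to B$ is a representable isofibration if for every object $X$, given $g\colon X\to A$, $h\colon X\to B$ and invertible $\alpha\colon fg\cong h$, there exist $h'\colon X\to A$ and invertible $\alpha'\colon g\cong h'$ with $f\alpha'=\alpha$. A cleavage is a choice of such $(\alpha',h')$ for every $(g,\alpha,h)$, natural in $X$; it is normal if $\alpha'$ is an identity whenever $\alpha$ is. A normal isofibration is a representable isofibration admitting a normal cleavage. *)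

theory Defs
  imports Main
begin

text \<open>A (strict) 2-category presented by its sets of objects, 1-cells and 2-cells,
  with source/target of 1-cells, domain/codomain (1-cells) of 2-cells, composition of
  1-cells (cmp g f = g after f), identity 1-cells, vertical composition
  (vcmp b a = b after a), horizontal composition (hcmp b a, with b on the left) and
  identity 2-cells.  Operations are only meaningful on composable arguments.\<close>

record ('o, 'm, 'c) twocat =
  Obj  :: "'o set"
  Arr  :: "'m set"
  Cell :: "'c set"
  src  :: "'m \<Rightarrow> 'o"
  tgt  :: "'m \<Rightarrow> 'o"
  dom2 :: "'c \<Rightarrow> 'm"
  cod2 :: "'c \<Rightarrow> 'm"
  cmp  :: "'m \<Rightarrow> 'm \<Rightarrow> 'm"
  ide  :: "'o \<Rightarrow> 'm"
  vcmp :: "'c \<Rightarrow> 'c \<Rightarrow> 'c"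
  hcmp :: "'c \<Rightarrow> 'c \<Rightarrow> 'c"
  idc  :: "'m \<Rightarrow> 'c"

definition hom :: "('o, 'm, 'c, 'x) twocat_scheme \<Rightarrow> 'o \<Rightarrow> 'o \<Rightarrow> 'm set" where
  "hom C a b = {f \<in> Arr C. src C f = a \<and> tgt C f = b}"

definition cells :: "('o, 'm, 'c, 'x) twocat_scheme \<Rightarrow> 'm \<Rightarrow> 'm \<Rightarrow> 'c set" where
  "cells C f g = {\<alpha> \<in> Cell C. dom2 C \<alpha> = f \<and> cod2 C \<alpha> = g}"

definition two_category :: "('o, 'm, 'c, 'x) twocat_scheme \<Rightarrow> bool" where
  "two_category C \<longleftrightarrow>
     \<comment> \<open>1-cells\<close>
     (\<forall>f \<in> Arr C. src C f \<in> Obj C \<and> tgt C f \<in> Obj C) \<and>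
     (\<forall>a \<in> Obj C. ide C a \<in> hom C a a) \<and>
     (\<forall>f \<in> Arr C. \<forall>g \<in> Arr C. src C g = tgt C f \<longrightarrow>
        cmp C g f \<in> hom C (src C f) (tgt C g)) \<and>
     (\<forall>f \<in> Arr C. \<forall>g \<in> Arr C. \<forall>h \<in> Arr C. src C g = tgt C f \<longrightarrow> src C h = tgt C g \<longrightarrow>
        cmp C h (cmp C g f) = cmp C (cmp C h g) f) \<and>
     (\<forall>f \<in> Arr C. cmp C (ide C (tgt C f)) f = f \<and> cmp C f (ide C (src C f)) = f) \<and>
     \<comment> \<open>2-cells go between parallel 1-cells\<close>
     (\<forall>\<alpha> \<in> Cell C. dom2 C \<alpha> \<in> Arr C \<and> cod2 C \<alpha> \<in> Arr C \<and>
        src C (dom2 C \<alpha>) = src C (cod2 C \<alpha>) \<and> tgt C (dom2 C \<alpha>) = tgt C (cod2 C \<alpha>)) \<and>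
     (\<forall>f \<in> Arr C. idc C f \<in> cells C f f) \<and>
     \<comment> \<open>vertical composition\<close>
     (\<forall>\<alpha> \<in> Cell C. \<forall>\<beta> \<in> Cell C. dom2 C \<beta> = cod2 C \<alpha> \<longrightarrow>
        vcmp C \<beta> \<alpha> \<in> cells C (dom2 C \<alpha>) (cod2 C \<beta>)) \<and>
     (\<forall>\<alpha> \<in> Cell C. \<forall>\<beta> \<in> Cell C. \<forall>\<gamma> \<in> Cell C. dom2 C \<beta> = cod2 C \<alpha> \<longrightarrow> dom2 C \<gamma> = cod2 C \<beta> \<longrightarrow>
        vcmp C \<gamma> (vcmp C \<beta> \<alpha>) = vcmp C (vcmp C \<gamma> \<beta>) \<alpha>) \<and>
     (\<forall>\<alpha> \<in> Cell C. vcmp C (idc C (cod2 C \<alpha>)) \<alpha> = \<alpha> \<and> vcmp C \<alpha> (idc C (dom2 C \<alpha>)) = \<alpha>) \<and>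
     \<comment> \<open>horizontal composition\<close>
     (\<forall>\<alpha> \<in> Cell C. \<forall>\<beta> \<in> Cell C. src C (dom2 C \<beta>) = tgt C (dom2 C \<alpha>) \<longrightarrow>
        hcmp C \<beta> \<alpha> \<in> cells C (cmp C (dom2 C \<beta>) (dom2 C \<alpha>)) (cmp C (cod2 C \<beta>) (cod2 C \<alpha>))) \<and>
     (\<forall>\<alpha> \<in> Cell C. \<forall>\<beta> \<in> Cell C. \<forall>\<gamma> \<in> Cell C.
        src C (dom2 C \<beta>) = tgt C (dom2 C \<alpha>) \<longrightarrow> src C (dom2 C \<gamma>) = tgt C (dom2 C \<beta>) \<longrightarrow>
        hcmp C \<gamma> (hcmp C \<beta> \<alpha>) = hcmp C (hcmp C \<gamma> \<beta>) \<alpha>) \<and>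
     (\<forall>\<alpha> \<in> Cell C. hcmp C (idc C (ide C (tgt C (dom2 C \<alpha>)))) \<alpha> = \<alpha> \<and>
        hcmp C \<alpha> (idc C (ide C (src C (dom2 C \<alpha>)))) = \<alpha>) \<and>
     (\<forall>f \<in> Arr C. \<forall>g \<in> Arr C. src C g = tgt C f \<longrightarrow>
        hcmp C (idc C g) (idc C f) = idc C (cmp C g f)) \<and>
     \<comment> \<open>interchange law\<close>
     (\<forall>\<alpha> \<in> Cell C. \<forall>\<beta> \<in> Cell C. \<forall>\<gamma> \<in> Cell C. \<forall>\<delta> \<in> Cell C.
        dom2 C \<beta> = cod2 C \<alpha> \<longrightarrow> dom2 C \<delta> = cod2 C \<gamma> \<longrightarrow> src C (dom2 C \<gamma>) = tgt C (dom2 C \<alpha>) \<longrightarrow>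
        hcmp C (vcmp C \<delta> \<gamma>) (vcmp C \<beta> \<alpha>) = vcmp C (hcmp C \<delta> \<beta>) (hcmp C \<gamma> \<alpha>))"

definition lwhisk :: "('o, 'm, 'c, 'x) twocat_scheme \<Rightarrow> 'm \<Rightarrow> 'c \<Rightarrow> 'c" where
  "lwhisk C f \<alpha> = hcmp C (idc C f) \<alpha>"

definition rwhisk :: "('o, 'm, 'c, 'x) twocat_scheme \<Rightarrow> 'c \<Rightarrow> 'm \<Rightarrow> 'c" where
  "rwhisk C \<alpha> h = hcmp C \<alpha> (idc C h)"

definition invertible2 :: "('o, 'm, 'c, 'x) twocat_scheme \<Rightarrow> 'c \<Rightarrow> bool" where
  "invertible2 C \<alpha> \<longleftrightarrow> \<alpha> \<in> Cell C \<and>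
     (\<exists>\<beta> \<in> cells C (cod2 C \<alpha>) (dom2 C \<alpha>).
        vcmp C \<beta> \<alpha> = idc C (dom2 C \<alpha>) \<and> vcmp C \<alpha> \<beta> = idc C (cod2 C \<alpha>))"

record ('o1, 'm1, 'c1, 'o2, 'm2, 'c2) twofun =
  fo :: "'o1 \<Rightarrow> 'o2"
  fm :: "'m1 \<Rightarrow> 'm2"
  fc :: "'c1 \<Rightarrow> 'c2"

definition two_functor ::
  "('o1, 'm1, 'c1, 'x) twocat_scheme \<Rightarrow> ('o2, 'm2, 'c2, 'y) twocat_scheme \<Rightarrow>
   ('o1, 'm1, 'c1, 'o2, 'm2, 'c2, 'z) twofun_scheme \<Rightarrow> bool" where
  "two_functor L K U \<longleftrightarrow> two_category L \<and> two_category K \<and>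
     (\<forall>a \<in> Obj L. fo U a \<in> Obj K) \<and>
     (\<forall>f \<in> Arr L. fm U f \<in> hom K (fo U (src L f)) (fo U (tgt L f))) \<and>
     (\<forall>\<alpha> \<in> Cell L. fc U \<alpha> \<in> cells K (fm U (dom2 L \<alpha>)) (fm U (cod2 L \<alpha>))) \<and>
     (\<forall>a \<in> Obj L. fm U (ide L a) = ide K (fo U a)) \<and>
     (\<forall>f \<in> Arr L. \<forall>g \<in> Arr L. src L g = tgt L f \<longrightarrow> fm U (cmp L g f) = cmp K (fm U g) (fm U f)) \<and>
     (\<forall>f \<in> Arr L. fc U (idc L f) = idc K (fm U f)) \<and>
     (\<forall>\<alpha> \<in> Cell L. \<forall>\<beta> \<in> Cell L. dom2 L \<beta> = cod2 L \<alpha> \<longrightarrow>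
        fc U (vcmp L \<beta> \<alpha>) = vcmp K (fc U \<beta>) (fc U \<alpha>)) \<and>
     (\<forall>\<alpha> \<in> Cell L. \<forall>\<beta> \<in> Cell L. src L (dom2 L \<beta>) = tgt L (dom2 L \<alpha>) \<longrightarrow>
        fc U (hcmp L \<beta> \<alpha>) = hcmp K (fc U \<beta>) (fc U \<alpha>))"

text \<open>(L, u, v, lambda) is a pseudolimit of f : A \<rightarrow> B: u : L \<rightarrow> A, v : L \<rightarrow> B and
  lambda : v \<cong> f u invertible, universal in the (strict) 2-dimensional sense: for each
  object X, the functor from C(X,L) to pseudo-cones over f with vertex X is an
  isomorphism of categories (bijective on objects and on morphisms).\<close>

definition pseudolimit ::
  "('o, 'm, 'c, 'x) twocat_scheme \<Rightarrow> 'm \<Rightarrow> 'o \<Rightarrow> 'm \<Rightarrow> 'm \<Rightarrow> 'c \<Rightarrow> bool" where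
  "pseudolimit C f L u v lam \<longleftrightarrow>
     f \<in> Arr C \<and> L \<in> Obj C \<and>
     u \<in> hom C L (src C f) \<and> v \<in> hom C L (tgt C f) \<and>
     lam \<in> cells C v (cmp C f u) \<and> invertible2 C lam \<and>
     \<comment> \<open>one-dimensional universal property\<close>
     (\<forall>X \<in> Obj C. \<forall>p \<in> hom C X (src C f). \<forall>q \<in> hom C X (tgt C f).
        \<forall>\<theta> \<in> cells C q (cmp C f p). invertible2 C \<theta> \<longrightarrow>
          (\<exists>!h. h \<in> hom C X L \<and> cmp C u h = p \<and> cmp C v h = q \<and> rwhisk C lam h = \<theta>)) \<and>
     \<comment> \<open>two-dimensional universal property\<close>
     (\<forall>X \<in> Obj C. \<forall>h \<in> hom C X L. \<forall>k \<in> hom C X L.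
        \<forall>\<alpha> \<in> cells C (cmp C u h) (cmp C u k). \<forall>\<beta> \<in> cells C (cmp C v h) (cmp C v k).
          vcmp C (lwhisk C f \<alpha>) (rwhisk C lam h) = vcmp C (rwhisk C lam k) \<beta> \<longrightarrow>
          (\<exists>!\<gamma>. \<gamma> \<in> cells C h k \<and> lwhisk C u \<gamma> = \<alpha> \<and> lwhisk C v \<gamma> = \<beta>))"

definition has_pseudolimits_of_arrows :: "('o, 'm, 'c, 'x) twocat_scheme \<Rightarrow> bool" where
  "has_pseudolimits_of_arrows C \<longleftrightarrow>
     (\<forall>f \<in> Arr C. \<exists>L u v lam. pseudolimit C f L u v lam)"

definition preserves_pseudolimits_of_arrows ::
  "('o1, 'm1, 'c1, 'x) twocat_scheme \<Rightarrow> ('o2, 'm2, 'c2, 'y) twocat_scheme \<Rightarrow>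
   ('o1, 'm1, 'c1, 'o2, 'm2, 'c2, 'z) twofun_scheme \<Rightarrow> bool" where
  "preserves_pseudolimits_of_arrows L K U \<longleftrightarrow>
     (\<forall>f P u v lam. pseudolimit L f P u v lam \<longrightarrow>
        pseudolimit K (fm U f) (fo U P) (fm U u) (fm U v) (fc U lam))"

definition equivalence :: "('o, 'm, 'c, 'x) twocat_scheme \<Rightarrow> 'm \<Rightarrow> bool" where
  "equivalence C f \<longleftrightarrow> f \<in> Arr C \<and>
     (\<exists>g \<in> hom C (tgt C f) (src C f).
        (\<exists>\<eta> \<in> cells C (ide C (src C f)) (cmp C g f). invertible2 C \<eta>) \<and>
        (\<exists>\<epsilon> \<in> cells C (cmp C f g) (ide C (tgt C f)). invertible2 C \<epsilon>))"

definition injective_equivalence :: "('o, 'm, 'c, 'x) twocat_scheme \<Rightarrow> 'm \<Rightarrow> bool" where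
  "injective_equivalence C f \<longleftrightarrow> equivalence C f \<and>
     (\<exists>r \<in> hom C (tgt C f) (src C f). cmp C r f = ide C (src C f))"

definition retract_equivalence :: "('o, 'm, 'c, 'x) twocat_scheme \<Rightarrow> 'm \<Rightarrow> bool" where
  "retract_equivalence C f \<longleftrightarrow> equivalence C f \<and>
     (\<exists>s \<in> hom C (tgt C f) (src C f). cmp C f s = ide C (tgt C f))"

definition repr_isofibration :: "('o, 'm, 'c, 'x) twocat_scheme \<Rightarrow> 'm \<Rightarrow> bool" where
  "repr_isofibration C f \<longleftrightarrow> f \<in> Arr C \<and>
     (\<forall>X \<in> Obj C. \<forall>g \<in> hom C X (src C f). \<forall>h \<in> hom C X (tgt C f).
        \<forall>\<alpha> \<in> cells C (cmp C f g) h. invertible2 C \<alpha> \<longrightarrow>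
          (\<exists>h' \<in> hom C X (src C f). \<exists>\<alpha>' \<in> cells C g h'.
             invertible2 C \<alpha>' \<and> lwhisk C f \<alpha>' = \<alpha>))"

text \<open>A cleavage assigns to each (g, \<alpha>, h) (with X = src g, h = cod \<alpha>) a pair
  (\<alpha>', h') as above, naturally in X: restricting along k : Y \<rightarrow> X commutes with the
  choice.\<close>

definition cleavage ::
  "('o, 'm, 'c, 'x) twocat_scheme \<Rightarrow> 'm \<Rightarrow> ('m \<Rightarrow> 'c \<Rightarrow> 'c \<times> 'm) \<Rightarrow> bool" where
  "cleavage C f cl \<longleftrightarrow> f \<in> Arr C \<and>
     (\<forall>X \<in> Obj C. \<forall>g \<in> hom C X (src C f). \<forall>h \<in> hom C X (tgt C f).
        \<forall>\<alpha> \<in> cells C (cmp C f g) h. invertible2 C \<alpha> \<longrightarrow>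
          snd (cl g \<alpha>) \<in> hom C X (src C f) \<and> fst (cl g \<alpha>) \<in> cells C g (snd (cl g \<alpha>)) \<and>
          invertible2 C (fst (cl g \<alpha>)) \<and> lwhisk C f (fst (cl g \<alpha>)) = \<alpha> \<and>
          (\<forall>Y \<in> Obj C. \<forall>k \<in> hom C Y X.
             cl (cmp C g k) (rwhisk C \<alpha> k) =
               (rwhisk C (fst (cl g \<alpha>)) k, cmp C (snd (cl g \<alpha>)) k)))"

definition normal_cleavage ::
  "('o, 'm, 'c, 'x) twocat_scheme \<Rightarrow> 'm \<Rightarrow> ('m \<Rightarrow> 'c \<Rightarrow> 'c \<times> 'm) \<Rightarrow> bool" where
  "normal_cleavage C f cl \<longleftrightarrow> cleavage C f cl \<and>
     (\<forall>X \<in> Obj C. \<forall>g \<in> hom C X (src C f).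
        fst (cl g (idc C (cmp C f g))) = idc C g)"

definition normal_isofibration :: "('o, 'm, 'c, 'x) twocat_scheme \<Rightarrow> 'm \<Rightarrow> bool" where
  "normal_isofibration C f \<longleftrightarrow> repr_isofibration C f \<and> (\<exists>cl. normal_cleavage C f cl)"

definition normal_retract_equivalence :: "('o, 'm, 'c, 'x) twocat_scheme \<Rightarrow> 'm \<Rightarrow> bool" where
  "normal_retract_equivalence C f \<longleftrightarrow> retract_equivalence C f \<and> normal_isofibration C f"

end

theory Submission
  imports Defs
begin

(* A lifting problem for f, an invertible alpha : f g => h, is the same thing as a pseudo-cone
   (g, h, alpha^-1) over f, so it is classified by a map k into the pseudolimit L_f and is the
   restriction along k of the generic problem lambda_f^-1 : f u_f => v_f.  Hence f is a
   representable isofibration iff lambda_f^-1 has a lift a, and whiskering a by the classifying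
   maps is then a cleavage; f is a normal isofibration iff some such a restricts to an identity
   along the map A -> L_f classifying the cone (1, f, 1).  A 2-functor preserving L_f carries
   these lifts to lifts for U f, while equivalences, retractions and sections are preserved by
   any 2-functor. *)

definition is_inverse2 :: "('o, 'm, 'c, 'x) twocat_scheme \<Rightarrow> 'c \<Rightarrow> 'c \<Rightarrow> bool" where
  "is_inverse2 C \<alpha> \<beta> \<longleftrightarrow> \<alpha> \<in> Cell C \<and> \<beta> \<in> cells C (cod2 C \<alpha>) (dom2 C \<alpha>) \<and>
     vcmp C \<beta> \<alpha> = idc C (dom2 C \<alpha>) \<and> vcmp C \<alpha> \<beta> = idc C (cod2 C \<alpha>)"

definition inv2 :: "('o, 'm, 'c, 'x) twocat_scheme \<Rightarrow> 'c \<Rightarrow> 'c" where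
  "inv2 C \<alpha> = (THE \<beta>. is_inverse2 C \<alpha> \<beta>)"

lemma invertible2_iff_is_inverse2: "invertible2 C \<alpha> \<longleftrightarrow> (\<exists>\<beta>. is_inverse2 C \<alpha> \<beta>)"
  unfolding invertible2_def is_inverse2_def by blast

lemma is_inverse2_sym: "is_inverse2 C \<alpha> \<beta> \<Longrightarrow> is_inverse2 C \<beta> \<alpha>"
  unfolding is_inverse2_def cells_def by auto

locale two_cat =
  fixes C :: "('o, 'm, 'c, 'x) twocat_scheme"
  assumes two_category: "two_category C"
begin

lemmas two_category_laws = two_category[unfolded two_category_def hom_def cells_def mem_Collect_eq]

lemma src_in_Obj: "f \<in> Arr C \<Longrightarrow> src C f \<in> Obj C"
  and tgt_in_Obj: "f \<in> Arr C \<Longrightarrow> tgt C f \<in> Obj C"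
  using two_category_laws by simp_all

lemma ide_simps:
  "a \<in> Obj C \<Longrightarrow> ide C a \<in> Arr C"
  "a \<in> Obj C \<Longrightarrow> src C (ide C a) = a"
  "a \<in> Obj C \<Longrightarrow> tgt C (ide C a) = a"
  using two_category_laws by simp_all

lemma cmp_simps:
  assumes "f \<in> Arr C" "g \<in> Arr C" "src C g = tgt C f"
  shows "cmp C g f \<in> Arr C" "src C (cmp C g f) = src C f" "tgt C (cmp C g f) = tgt C g"
  using two_category_laws assms by simp_all

lemma cmp_assoc:
  "\<lbrakk>f \<in> Arr C; g \<in> Arr C; h \<in> Arr C; src C g = tgt C f; src C h = tgt C g\<rbrakk> \<Longrightarrow>
    cmp C h (cmp C g f) = cmp C (cmp C h g) f"
  using two_category_laws by simp

lemma cmp_ide: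
  "\<lbrakk>f \<in> Arr C; tgt C f = a\<rbrakk> \<Longrightarrow> cmp C (ide C a) f = f"
  "\<lbrakk>f \<in> Arr C; src C f = a\<rbrakk> \<Longrightarrow> cmp C f (ide C a) = f"
  using two_category_laws by auto

lemma cell_simps:
  assumes "\<alpha> \<in> Cell C"
  shows "dom2 C \<alpha> \<in> Arr C" "cod2 C \<alpha> \<in> Arr C"
    "src C (cod2 C \<alpha>) = src C (dom2 C \<alpha>)" "tgt C (cod2 C \<alpha>) = tgt C (dom2 C \<alpha>)"
  using two_category_laws assms by simp_all

lemma idc_simps:
  assumes "f \<in> Arr C"
  shows "idc C f \<in> Cell C" "dom2 C (idc C f) = f" "cod2 C (idc C f) = f"
  using two_category_laws assms by simp_all

lemma vcmp_simps:
  assumes "\<alpha> \<in> Cell C" "\<beta> \<in> Cell C" "dom2 C \<beta> = cod2 C \<alpha>"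
  shows "vcmp C \<beta> \<alpha> \<in> Cell C" "dom2 C (vcmp C \<beta> \<alpha>) = dom2 C \<alpha>"
    "cod2 C (vcmp C \<beta> \<alpha>) = cod2 C \<beta>"
  using two_category_laws assms by simp_all

lemma vcmp_assoc:
  "\<lbrakk>\<alpha> \<in> Cell C; \<beta> \<in> Cell C; \<gamma> \<in> Cell C; dom2 C \<beta> = cod2 C \<alpha>; dom2 C \<gamma> = cod2 C \<beta>\<rbrakk> \<Longrightarrow>
    vcmp C \<gamma> (vcmp C \<beta> \<alpha>) = vcmp C (vcmp C \<gamma> \<beta>) \<alpha>"
  using two_category_laws by simp

lemma vcmp_idc:
  "\<lbrakk>\<alpha> \<in> Cell C; cod2 C \<alpha> = f\<rbrakk> \<Longrightarrow> vcmp C (idc C f) \<alpha> = \<alpha>"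
  "\<lbrakk>\<alpha> \<in> Cell C; dom2 C \<alpha> = f\<rbrakk> \<Longrightarrow> vcmp C \<alpha> (idc C f) = \<alpha>"
  using two_category_laws by auto

lemma hcmp_simps:
  assumes "\<alpha> \<in> Cell C" "\<beta> \<in> Cell C" "src C (dom2 C \<beta>) = tgt C (dom2 C \<alpha>)"
  shows "hcmp C \<beta> \<alpha> \<in> Cell C" "dom2 C (hcmp C \<beta> \<alpha>) = cmp C (dom2 C \<beta>) (dom2 C \<alpha>)"
    "cod2 C (hcmp C \<beta> \<alpha>) = cmp C (cod2 C \<beta>) (cod2 C \<alpha>)"
  using two_category_laws assms(1,2) assms(3)[symmetric] by simp_all

lemma hcmp_assoc:
  assumes "\<alpha> \<in> Cell C" "\<beta> \<in> Cell C" "\<gamma> \<in> Cell C"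
    "src C (dom2 C \<beta>) = tgt C (dom2 C \<alpha>)" "src C (dom2 C \<gamma>) = tgt C (dom2 C \<beta>)"
  shows "hcmp C \<gamma> (hcmp C \<beta> \<alpha>) = hcmp C (hcmp C \<gamma> \<beta>) \<alpha>"
  using two_category_laws assms(1-3) assms(4,5)[symmetric] by simp

lemma hcmp_idc_idc:
  "\<lbrakk>f \<in> Arr C; g \<in> Arr C; src C g = tgt C f\<rbrakk> \<Longrightarrow> hcmp C (idc C g) (idc C f) = idc C (cmp C g f)"
  using two_category_laws by simp

lemma interchange:
  "\<lbrakk>\<alpha> \<in> Cell C; \<beta> \<in> Cell C; \<gamma> \<in> Cell C; \<delta> \<in> Cell C;
    dom2 C \<beta> = cod2 C \<alpha>; dom2 C \<delta> = cod2 C \<gamma>; src C (dom2 C \<gamma>) = tgt C (dom2 C \<alpha>)\<rbrakk> \<Longrightarrow>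
    hcmp C (vcmp C \<delta> \<gamma>) (vcmp C \<beta> \<alpha>) = vcmp C (hcmp C \<delta> \<beta>) (hcmp C \<gamma> \<alpha>)"
  using two_category_laws by simp

(* Only now declared simp: together with the unfolded laws they make the simplifier diverge
   in the proofs above. *)
declare ide_simps [simp] cmp_simps [simp] cmp_ide [simp] cell_simps [simp] idc_simps [simp]
  vcmp_simps [simp] vcmp_idc [simp] hcmp_simps [simp] hcmp_idc_idc [simp]

lemma rwhisk_simps [simp]:
  assumes "\<alpha> \<in> Cell C" "k \<in> Arr C" "tgt C k = src C (dom2 C \<alpha>)"
  shows "rwhisk C \<alpha> k \<in> Cell C" "dom2 C (rwhisk C \<alpha> k) = cmp C (dom2 C \<alpha>) k"
    "cod2 C (rwhisk C \<alpha> k) = cmp C (cod2 C \<alpha>) k"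
  using assms unfolding rwhisk_def by simp_all

lemma lwhisk_simps [simp]:
  assumes "\<alpha> \<in> Cell C" "f \<in> Arr C" "src C f = tgt C (dom2 C \<alpha>)"
  shows "lwhisk C f \<alpha> \<in> Cell C" "dom2 C (lwhisk C f \<alpha>) = cmp C f (dom2 C \<alpha>)"
    "cod2 C (lwhisk C f \<alpha>) = cmp C f (cod2 C \<alpha>)"
  using assms unfolding lwhisk_def by simp_all

lemma rwhisk_idc [simp]:
  "\<lbrakk>g \<in> Arr C; k \<in> Arr C; tgt C k = src C g\<rbrakk> \<Longrightarrow> rwhisk C (idc C g) k = idc C (cmp C g k)"
  unfolding rwhisk_def by simp

lemma rwhisk_rwhisk:
  "\<lbrakk>\<alpha> \<in> Cell C; k \<in> Arr C; k' \<in> Arr C; tgt C k = src C (dom2 C \<alpha>); tgt C k' = src C k\<rbrakk> \<Longrightarrow>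
    rwhisk C (rwhisk C \<alpha> k) k' = rwhisk C \<alpha> (cmp C k k')"
  unfolding rwhisk_def using hcmp_assoc[of "idc C k'" "idc C k" \<alpha>] by simp

lemma lwhisk_rwhisk:
  "\<lbrakk>\<alpha> \<in> Cell C; k \<in> Arr C; f \<in> Arr C; tgt C k = src C (dom2 C \<alpha>); src C f = tgt C (dom2 C \<alpha>)\<rbrakk> \<Longrightarrow>
    lwhisk C f (rwhisk C \<alpha> k) = rwhisk C (lwhisk C f \<alpha>) k"
  unfolding rwhisk_def lwhisk_def by (simp add: hcmp_assoc)

lemma rwhisk_vcmp:
  "\<lbrakk>\<alpha> \<in> Cell C; \<beta> \<in> Cell C; dom2 C \<beta> = cod2 C \<alpha>; k \<in> Arr C; tgt C k = src C (dom2 C \<alpha>)\<rbrakk> \<Longrightarrow>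
    rwhisk C (vcmp C \<beta> \<alpha>) k = vcmp C (rwhisk C \<beta> k) (rwhisk C \<alpha> k)"
  unfolding rwhisk_def using interchange[of "idc C k" "idc C k" \<alpha> \<beta>] by simp

lemma is_inverse2_unique:
  assumes "is_inverse2 C \<alpha> \<beta>" "is_inverse2 C \<alpha> \<gamma>"
  shows "\<beta> = \<gamma>"
proof -
  have \<alpha>: "\<alpha> \<in> Cell C" and \<beta>: "\<beta> \<in> Cell C" "dom2 C \<beta> = cod2 C \<alpha>" "vcmp C \<beta> \<alpha> = idc C (dom2 C \<alpha>)"
    and \<gamma>: "\<gamma> \<in> Cell C" "cod2 C \<gamma> = dom2 C \<alpha>" "vcmp C \<alpha> \<gamma> = idc C (cod2 C \<alpha>)"
    using assms unfolding is_inverse2_def cells_def by auto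
  have "\<beta> = vcmp C \<beta> (vcmp C \<alpha> \<gamma>)"
    using \<beta> \<gamma>(3) by (simp add: vcmp_idc)
  also have "\<dots> = vcmp C (vcmp C \<beta> \<alpha>) \<gamma>"
    by (rule vcmp_assoc) (use \<alpha> \<beta> \<gamma> in simp_all)
  also have "\<dots> = \<gamma>"
    using \<beta>(3) \<gamma> by (simp add: vcmp_idc)
  finally show ?thesis .
qed

lemma inv2_eqI: "is_inverse2 C \<alpha> \<beta> \<Longrightarrow> inv2 C \<alpha> = \<beta>"
  unfolding inv2_def by (rule the_equality) (auto intro: is_inverse2_unique)

lemma is_inverse2_inv2: "invertible2 C \<alpha> \<Longrightarrow> is_inverse2 C \<alpha> (inv2 C \<alpha>)"
  using inv2_eqI unfolding invertible2_iff_is_inverse2 by blast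

lemma inv2_simps [simp]:
  assumes "invertible2 C \<alpha>"
  shows "inv2 C \<alpha> \<in> Cell C" "dom2 C (inv2 C \<alpha>) = cod2 C \<alpha>" "cod2 C (inv2 C \<alpha>) = dom2 C \<alpha>"
  using is_inverse2_inv2[OF assms] unfolding is_inverse2_def cells_def by simp_all

lemma invertible2_inv2:
  assumes "invertible2 C \<alpha>"
  shows "invertible2 C (inv2 C \<alpha>)"
  unfolding invertible2_iff_is_inverse2 using is_inverse2_sym[OF is_inverse2_inv2[OF assms]] by blast

lemma inv2_inv2 [simp]: "invertible2 C \<alpha> \<Longrightarrow> inv2 C (inv2 C \<alpha>) = \<alpha>"
  by (rule inv2_eqI) (rule is_inverse2_sym[OF is_inverse2_inv2])

lemma invertible2_idc [simp]: "f \<in> Arr C \<Longrightarrow> invertible2 C (idc C f)"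
  unfolding invertible2_iff_is_inverse2 is_inverse2_def cells_def by (intro exI[of _ "idc C f"]) simp

lemma inv2_idc [simp]: "f \<in> Arr C \<Longrightarrow> inv2 C (idc C f) = idc C f"
  by (rule inv2_eqI) (simp add: is_inverse2_def cells_def)

lemma is_inverse2_rwhisk:
  assumes "is_inverse2 C \<alpha> \<beta>" "k \<in> Arr C" "tgt C k = src C (dom2 C \<alpha>)"
  shows "is_inverse2 C (rwhisk C \<alpha> k) (rwhisk C \<beta> k)"
  using assms unfolding is_inverse2_def cells_def by (auto simp flip: rwhisk_vcmp)

lemma invertible2_rwhisk:
  "\<lbrakk>invertible2 C \<alpha>; k \<in> Arr C; tgt C k = src C (dom2 C \<alpha>)\<rbrakk> \<Longrightarrow> invertible2 C (rwhisk C \<alpha> k)"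
  using is_inverse2_rwhisk unfolding invertible2_iff_is_inverse2 by blast

lemma inv2_rwhisk:
  "\<lbrakk>invertible2 C \<alpha>; k \<in> Arr C; tgt C k = src C (dom2 C \<alpha>)\<rbrakk> \<Longrightarrow>
    inv2 C (rwhisk C \<alpha> k) = rwhisk C (inv2 C \<alpha>) k"
  by (rule inv2_eqI) (rule is_inverse2_rwhisk[OF is_inverse2_inv2])

end

lemma repr_isofibrationE:
  assumes "repr_isofibration C f" "X \<in> Obj C" "g \<in> hom C X (src C f)" "h \<in> hom C X (tgt C f)"
    "\<alpha> \<in> cells C (cmp C f g) h" "invertible2 C \<alpha>"
  obtains h' \<alpha>' where "h' \<in> hom C X (src C f)" "\<alpha>' \<in> cells C g h'" "invertible2 C \<alpha>'"
    "lwhisk C f \<alpha>' = \<alpha>"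
  using assms unfolding repr_isofibration_def by blast

lemma cleavageD:
  assumes "cleavage C f cl" "X \<in> Obj C" "g \<in> hom C X (src C f)" "h \<in> hom C X (tgt C f)"
    "\<alpha> \<in> cells C (cmp C f g) h" "invertible2 C \<alpha>"
  shows "snd (cl g \<alpha>) \<in> hom C X (src C f)" "fst (cl g \<alpha>) \<in> cells C g (snd (cl g \<alpha>))"
    "invertible2 C (fst (cl g \<alpha>))" "lwhisk C f (fst (cl g \<alpha>)) = \<alpha>"
    "\<lbrakk>Y \<in> Obj C; k \<in> hom C Y X\<rbrakk> \<Longrightarrow>
      cl (cmp C g k) (rwhisk C \<alpha> k) = (rwhisk C (fst (cl g \<alpha>)) k, cmp C (snd (cl g \<alpha>)) k)"
  using assms unfolding cleavage_def by blast+

lemma normal_cleavageD: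
  "\<lbrakk>normal_cleavage C f cl; X \<in> Obj C; g \<in> hom C X (src C f)\<rbrakk> \<Longrightarrow>
    fst (cl g (idc C (cmp C f g))) = idc C g"
  unfolding normal_cleavage_def by blast

lemma repr_isofibration_if_cleavage: "cleavage C f cl \<Longrightarrow> repr_isofibration C f"
  unfolding cleavage_def repr_isofibration_def by blast

locale arrow_pseudolimit = two_cat C
  for C :: "('o, 'm, 'c, 'x) twocat_scheme" +
  fixes f :: 'm and P :: 'o and u v :: 'm and lam :: 'c
  assumes pseudolimit: "pseudolimit C f P u v lam"
begin

lemma pseudolimit_simps [simp]:
  "f \<in> Arr C" "P \<in> Obj C" "u \<in> Arr C" "src C u = P" "tgt C u = src C f"
  "v \<in> Arr C" "src C v = P" "tgt C v = tgt C f"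
  "lam \<in> Cell C" "dom2 C lam = v" "cod2 C lam = cmp C f u"
  using pseudolimit unfolding pseudolimit_def hom_def cells_def by auto

lemma invertible2_lam: "invertible2 C lam"
  using pseudolimit unfolding pseudolimit_def by blast

definition induced :: "'m \<Rightarrow> 'c \<Rightarrow> 'm" where
  "induced g \<alpha> = (THE k. k \<in> hom C (src C g) P \<and> cmp C u k = g \<and> cmp C v k = cod2 C \<alpha> \<and>
     rwhisk C lam k = inv2 C \<alpha>)"

context
  fixes X g h \<alpha>
  assumes X: "X \<in> Obj C" and g: "g \<in> hom C X (src C f)" and h: "h \<in> hom C X (tgt C f)"
    and \<alpha>: "\<alpha> \<in> cells C (cmp C f g) h" "invertible2 C \<alpha>"
begin

lemma ex1_induced:
  "\<exists>!k. k \<in> hom C X P \<and> cmp C u k = g \<and> cmp C v k = h \<and> rwhisk C lam k = inv2 C \<alpha>"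
proof -
  have "inv2 C \<alpha> \<in> cells C h (cmp C f g)" "invertible2 C (inv2 C \<alpha>)"
    using \<alpha> invertible2_inv2 unfolding cells_def by auto
  then show ?thesis
    using pseudolimit X g h unfolding pseudolimit_def by blast
qed

lemma induced:
  "induced g \<alpha> \<in> hom C X P" "cmp C u (induced g \<alpha>) = g" "cmp C v (induced g \<alpha>) = h"
  "rwhisk C lam (induced g \<alpha>) = inv2 C \<alpha>"
proof -
  have "src C g = X" "cod2 C \<alpha> = h"
    using g \<alpha> unfolding hom_def cells_def by auto
  then show "induced g \<alpha> \<in> hom C X P" "cmp C u (induced g \<alpha>) = g" "cmp C v (induced g \<alpha>) = h"
    "rwhisk C lam (induced g \<alpha>) = inv2 C \<alpha>"
    using theI'[OF ex1_induced] unfolding induced_def by simp_all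
qed

lemma induced_eqI:
  assumes "k \<in> hom C X P" "cmp C u k = g" "cmp C v k = h" "rwhisk C lam k = inv2 C \<alpha>"
  shows "induced g \<alpha> = k"
  using ex1_induced induced assms by blast

end

lemma induced_rwhisk:
  assumes X: "X \<in> Obj C" and g: "g \<in> hom C X (src C f)" and h: "h \<in> hom C X (tgt C f)"
    and \<alpha>: "\<alpha> \<in> cells C (cmp C f g) h" "invertible2 C \<alpha>"
    and Y: "Y \<in> Obj C" and k: "k \<in> hom C Y X"
  shows "induced (cmp C g k) (rwhisk C \<alpha> k) = cmp C (induced g \<alpha>) k"
proof (rule induced_eqI)
  have g': "g \<in> Arr C" "src C g = X" "tgt C g = src C f"
    and k': "k \<in> Arr C" "src C k = Y" "tgt C k = X" and \<alpha>': "\<alpha> \<in> Cell C" "dom2 C \<alpha> = cmp C f g" "cod2 C \<alpha> = h"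
    using g h k \<alpha> unfolding hom_def cells_def by auto
  note i = induced[OF X g h \<alpha>]
  have i': "induced g \<alpha> \<in> Arr C" "src C (induced g \<alpha>) = X" "tgt C (induced g \<alpha>) = P"
    using i(1) unfolding hom_def by auto
  show "cmp C g k \<in> hom C Y (src C f)" "cmp C h k \<in> hom C Y (tgt C f)"
    using g h k' unfolding hom_def by auto
  show "rwhisk C \<alpha> k \<in> cells C (cmp C f (cmp C g k)) (cmp C h k)"
    using \<alpha>' g' k' unfolding cells_def by (simp add: cmp_assoc)
  show "invertible2 C (rwhisk C \<alpha> k)"
    using \<alpha> \<alpha>' g' k' by (simp add: invertible2_rwhisk)
  show "cmp C (induced g \<alpha>) k \<in> hom C Y P"
    using i' k' unfolding hom_def by simp
  show "cmp C u (cmp C (induced g \<alpha>) k) = cmp C g k" "cmp C v (cmp C (induced g \<alpha>) k) = cmp C h k"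
    using i i' k' by (simp_all add: cmp_assoc)
  have "rwhisk C lam (cmp C (induced g \<alpha>) k) = rwhisk C (inv2 C \<alpha>) k"
    using i i' k' by (simp flip: rwhisk_rwhisk)
  also have "\<dots> = inv2 C (rwhisk C \<alpha> k)"
    using \<alpha> \<alpha>' g' k' by (simp add: inv2_rwhisk)
  finally show "rwhisk C lam (cmp C (induced g \<alpha>) k) = inv2 C (rwhisk C \<alpha> k)" .
qed (use Y in simp)

definition generic_lift :: "'c \<Rightarrow> bool" where
  "generic_lift a \<longleftrightarrow> invertible2 C a \<and> dom2 C a = u \<and> lwhisk C f a = inv2 C lam"

lemma generic_liftD:
  assumes "generic_lift a"
  shows "a \<in> Cell C" "invertible2 C a" "dom2 C a = u" "lwhisk C f a = inv2 C lam"
    "cod2 C a \<in> Arr C" "src C (cod2 C a) = P" "tgt C (cod2 C a) = src C f"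
  using assms cell_simps[of a] unfolding generic_lift_def invertible2_def by auto

lemma lwhisk_rwhisk_generic_lift:
  assumes a: "generic_lift a"
    and X: "X \<in> Obj C" and g: "g \<in> hom C X (src C f)" and h: "h \<in> hom C X (tgt C f)"
    and \<alpha>: "\<alpha> \<in> cells C (cmp C f g) h" "invertible2 C \<alpha>"
  shows "lwhisk C f (rwhisk C a (induced g \<alpha>)) = \<alpha>"
proof -
  note i = induced[OF X g h \<alpha>]
  have i': "induced g \<alpha> \<in> Arr C" "tgt C (induced g \<alpha>) = P"
    using i(1) unfolding hom_def by auto
  have "lwhisk C f (rwhisk C a (induced g \<alpha>)) = rwhisk C (inv2 C lam) (induced g \<alpha>)"
    using generic_liftD[OF a] i' by (simp add: lwhisk_rwhisk)
  also have "\<dots> = inv2 C (rwhisk C lam (induced g \<alpha>))"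
    using invertible2_lam i' by (simp add: inv2_rwhisk)
  also have "\<dots> = \<alpha>"
    using i(4) \<alpha>(2) by simp
  finally show ?thesis .
qed

definition generic_cleavage :: "'c \<Rightarrow> 'm \<Rightarrow> 'c \<Rightarrow> 'c \<times> 'm" where
  "generic_cleavage a g \<alpha> = (rwhisk C a (induced g \<alpha>), cmp C (cod2 C a) (induced g \<alpha>))"

lemma cleavage_generic_cleavage:
  assumes a: "generic_lift a"
  shows "cleavage C f (generic_cleavage a)"
  unfolding cleavage_def
proof (intro conjI ballI impI)
  fix X g h \<alpha>
  assume X: "X \<in> Obj C" and g: "g \<in> hom C X (src C f)" and h: "h \<in> hom C X (tgt C f)"
    and \<alpha>: "\<alpha> \<in> cells C (cmp C f g) h" and inv\<alpha>: "invertible2 C \<alpha>"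
  note i = induced[OF X g h \<alpha> inv\<alpha>]
  have i': "induced g \<alpha> \<in> Arr C" "src C (induced g \<alpha>) = X" "tgt C (induced g \<alpha>) = P"
    using i(1) unfolding hom_def by auto
  note a' = generic_liftD[OF a]
  show "snd (generic_cleavage a g \<alpha>) \<in> hom C X (src C f)"
    using a' i' unfolding generic_cleavage_def hom_def by simp
  show "fst (generic_cleavage a g \<alpha>) \<in> cells C g (snd (generic_cleavage a g \<alpha>))"
    using a' i i' unfolding generic_cleavage_def cells_def by simp
  show "invertible2 C (fst (generic_cleavage a g \<alpha>))"
    using a' i' unfolding generic_cleavage_def by (simp add: invertible2_rwhisk)
  show "lwhisk C f (fst (generic_cleavage a g \<alpha>)) = \<alpha>"
    using lwhisk_rwhisk_generic_lift[OF a X g h \<alpha> inv\<alpha>] unfolding generic_cleavage_def by simp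
  fix Y k
  assume Y: "Y \<in> Obj C" and k: "k \<in> hom C Y X"
  have k': "k \<in> Arr C" "tgt C k = X"
    using k unfolding hom_def by auto
  show "generic_cleavage a (cmp C g k) (rwhisk C \<alpha> k) =
      (rwhisk C (fst (generic_cleavage a g \<alpha>)) k, cmp C (snd (generic_cleavage a g \<alpha>)) k)"
    using induced_rwhisk[OF X g h \<alpha> inv\<alpha> Y k] a' i' k'
    unfolding generic_cleavage_def by (simp add: rwhisk_rwhisk cmp_assoc)
qed simp

lemma repr_isofibration_iff_generic_lift: "repr_isofibration C f \<longleftrightarrow> (\<exists>a. generic_lift a)"
proof
  assume "repr_isofibration C f"
  moreover have "P \<in> Obj C" "u \<in> hom C P (src C f)" "v \<in> hom C P (tgt C f)"
    "inv2 C lam \<in> cells C (cmp C f u) v" "invertible2 C (inv2 C lam)"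
    using invertible2_lam invertible2_inv2 unfolding hom_def cells_def by auto
  ultimately obtain p a where "a \<in> cells C u p" "invertible2 C a" "lwhisk C f a = inv2 C lam"
    by (rule repr_isofibrationE)
  then show "\<exists>a. generic_lift a"
    unfolding generic_lift_def cells_def by blast
next
  assume "\<exists>a. generic_lift a"
  then obtain a where "generic_lift a" ..
  then show "repr_isofibration C f"
    by (rule repr_isofibration_if_cleavage[OF cleavage_generic_cleavage])
qed

definition canonical_section :: 'm where
  "canonical_section = induced (ide C (src C f)) (idc C f)"

lemma canonical_section:
  "canonical_section \<in> Arr C" "src C canonical_section = src C f" "tgt C canonical_section = P"
  "cmp C u canonical_section = ide C (src C f)" "cmp C v canonical_section = f"
  "rwhisk C lam canonical_section = idc C f"
proof -
  have A: "src C f \<in> Obj C"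
    using src_in_Obj by simp
  have "ide C (src C f) \<in> hom C (src C f) (src C f)" "f \<in> hom C (src C f) (tgt C f)"
    "idc C f \<in> cells C (cmp C f (ide C (src C f))) f" "invertible2 C (idc C f)"
    using A unfolding hom_def cells_def by simp_all
  note i = induced[OF A this, folded canonical_section_def]
  then show "canonical_section \<in> Arr C" "src C canonical_section = src C f" "tgt C canonical_section = P"
    "cmp C u canonical_section = ide C (src C f)" "cmp C v canonical_section = f"
    "rwhisk C lam canonical_section = idc C f"
    unfolding hom_def by simp_all
qed

definition normal_generic_lift :: "'c \<Rightarrow> bool" where
  "normal_generic_lift a \<longleftrightarrow> generic_lift a \<and> rwhisk C a canonical_section = idc C (ide C (src C f))"

lemma induced_idc:
  assumes "X \<in> Obj C" "g \<in> hom C X (src C f)"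
  shows "induced g (idc C (cmp C f g)) = cmp C canonical_section g"
proof -
  have g: "g \<in> Arr C" "src C g = X" "tgt C g = src C f"
    using assms unfolding hom_def by auto
  have "induced (cmp C (ide C (src C f)) g) (rwhisk C (idc C f) g) = cmp C canonical_section g"
    unfolding canonical_section_def
    by (rule induced_rwhisk) (use assms g src_in_Obj in \<open>auto simp: hom_def cells_def\<close>)
  then show ?thesis
    using g by simp
qed

lemma normal_cleavage_generic_cleavage:
  assumes a: "normal_generic_lift a"
  shows "normal_cleavage C f (generic_cleavage a)"
  unfolding normal_cleavage_def
proof (intro conjI ballI)
  show "cleavage C f (generic_cleavage a)"
    using a cleavage_generic_cleavage unfolding normal_generic_lift_def by blast
  fix X g
  assume X: "X \<in> Obj C" and g: "g \<in> hom C X (src C f)"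
  have g': "g \<in> Arr C" "src C g = X" "tgt C g = src C f"
    using g unfolding hom_def by auto
  have "generic_lift a"
    using a unfolding normal_generic_lift_def by blast
  have "fst (generic_cleavage a g (idc C (cmp C f g))) = rwhisk C a (cmp C canonical_section g)"
    unfolding generic_cleavage_def induced_idc[OF X g] by simp
  also have "\<dots> = rwhisk C (rwhisk C a canonical_section) g"
    using generic_liftD[OF \<open>generic_lift a\<close>] canonical_section g' by (simp add: rwhisk_rwhisk)
  also have "\<dots> = idc C g"
    using a g' src_in_Obj unfolding normal_generic_lift_def by simp
  finally show "fst (generic_cleavage a g (idc C (cmp C f g))) = idc C g" .
qed

lemma normal_isofibration_iff_normal_generic_lift:
  "normal_isofibration C f \<longleftrightarrow> (\<exists>a. normal_generic_lift a)"
proof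
  assume "normal_isofibration C f"
  then obtain cl where cl: "normal_cleavage C f cl"
    unfolding normal_isofibration_def by blast
  have A: "src C f \<in> Obj C"
    using src_in_Obj by simp
  have "P \<in> Obj C" "u \<in> hom C P (src C f)" "v \<in> hom C P (tgt C f)"
    "inv2 C lam \<in> cells C (cmp C f u) v" "invertible2 C (inv2 C lam)"
    using invertible2_lam invertible2_inv2 unfolding hom_def cells_def by auto
  note lift = cleavageD[OF cl[unfolded normal_cleavage_def, THEN conjunct1] this]
  define a where "a = fst (cl u (inv2 C lam))"
  have "generic_lift a"
    using lift(2-4) unfolding generic_lift_def a_def cells_def by blast
  moreover have "rwhisk C a canonical_section = idc C (ide C (src C f))"
  proof -
    have "rwhisk C (inv2 C lam) canonical_section = inv2 C (rwhisk C lam canonical_section)"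
      using invertible2_lam canonical_section by (simp flip: inv2_rwhisk)
    also have "\<dots> = idc C (cmp C f (ide C (src C f)))"
      using canonical_section by simp
    finally have "cl (ide C (src C f)) (idc C (cmp C f (ide C (src C f)))) =
        (rwhisk C a canonical_section, cmp C (snd (cl u (inv2 C lam))) canonical_section)"
      using lift(5)[OF A, of canonical_section] canonical_section
      unfolding a_def hom_def by simp
    then show ?thesis
      using normal_cleavageD[OF cl A, of "ide C (src C f)"] A unfolding hom_def by simp
  qed
  ultimately show "\<exists>a. normal_generic_lift a"
    unfolding normal_generic_lift_def by blast
next
  assume "\<exists>a. normal_generic_lift a"
  then obtain a where a: "normal_generic_lift a" ..
  then have "repr_isofibration C f"
    unfolding normal_generic_lift_def repr_isofibration_iff_generic_lift by blast
  then show "normal_isofibration C f"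
    using normal_cleavage_generic_cleavage[OF a] unfolding normal_isofibration_def by blast
qed

end

locale two_fun =
  fixes L :: "('o1, 'm1, 'c1, 'x) twocat_scheme" and K :: "('o2, 'm2, 'c2, 'y) twocat_scheme"
    and U :: "('o1, 'm1, 'c1, 'o2, 'm2, 'c2, 'z) twofun_scheme"
  assumes two_functor: "two_functor L K U"
begin

sublocale L: two_cat L
  using two_functor unfolding two_functor_def by unfold_locales blast

sublocale K: two_cat K
  using two_functor unfolding two_functor_def by unfold_locales blast

lemmas two_functor_laws = two_functor[unfolded two_functor_def hom_def cells_def mem_Collect_eq]

lemma fo_in_Obj [simp]: "a \<in> Obj L \<Longrightarrow> fo U a \<in> Obj K"
  using two_functor_laws by simp

lemma fm_simps [simp]:
  assumes "f \<in> Arr L"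
  shows "fm U f \<in> Arr K" "src K (fm U f) = fo U (src L f)" "tgt K (fm U f) = fo U (tgt L f)"
  using two_functor_laws assms by simp_all

lemma fc_simps [simp]:
  assumes "\<alpha> \<in> Cell L"
  shows "fc U \<alpha> \<in> Cell K" "dom2 K (fc U \<alpha>) = fm U (dom2 L \<alpha>)" "cod2 K (fc U \<alpha>) = fm U (cod2 L \<alpha>)"
  using two_functor_laws assms by simp_all

lemma fm_ide [simp]: "a \<in> Obj L \<Longrightarrow> fm U (ide L a) = ide K (fo U a)"
  using two_functor_laws by simp

lemma fm_cmp [simp]:
  "\<lbrakk>f \<in> Arr L; g \<in> Arr L; src L g = tgt L f\<rbrakk> \<Longrightarrow> fm U (cmp L g f) = cmp K (fm U g) (fm U f)"
  using two_functor_laws by simp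

lemma fc_idc [simp]: "f \<in> Arr L \<Longrightarrow> fc U (idc L f) = idc K (fm U f)"
  using two_functor_laws by simp

lemma fc_vcmp [simp]:
  "\<lbrakk>\<alpha> \<in> Cell L; \<beta> \<in> Cell L; dom2 L \<beta> = cod2 L \<alpha>\<rbrakk> \<Longrightarrow>
    fc U (vcmp L \<beta> \<alpha>) = vcmp K (fc U \<beta>) (fc U \<alpha>)"
  using two_functor_laws by simp

lemma fc_hcmp [simp]:
  "\<lbrakk>\<alpha> \<in> Cell L; \<beta> \<in> Cell L; src L (dom2 L \<beta>) = tgt L (dom2 L \<alpha>)\<rbrakk> \<Longrightarrow>
    fc U (hcmp L \<beta> \<alpha>) = hcmp K (fc U \<beta>) (fc U \<alpha>)"
  using two_functor_laws by simp

lemma fc_rwhisk [simp]: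
  "\<lbrakk>\<alpha> \<in> Cell L; k \<in> Arr L; tgt L k = src L (dom2 L \<alpha>)\<rbrakk> \<Longrightarrow>
    fc U (rwhisk L \<alpha> k) = rwhisk K (fc U \<alpha>) (fm U k)"
  unfolding rwhisk_def by simp

lemma fc_lwhisk [simp]:
  "\<lbrakk>\<alpha> \<in> Cell L; f \<in> Arr L; src L f = tgt L (dom2 L \<alpha>)\<rbrakk> \<Longrightarrow>
    fc U (lwhisk L f \<alpha>) = lwhisk K (fm U f) (fc U \<alpha>)"
  unfolding lwhisk_def by simp

lemma is_inverse2_fc: "is_inverse2 L \<alpha> \<beta> \<Longrightarrow> is_inverse2 K (fc U \<alpha>) (fc U \<beta>)"
  unfolding is_inverse2_def cells_def by (auto simp flip: fc_vcmp)

lemma invertible2_fc: "invertible2 L \<alpha> \<Longrightarrow> invertible2 K (fc U \<alpha>)"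
  using is_inverse2_fc unfolding invertible2_iff_is_inverse2 by blast

lemma fc_inv2: "invertible2 L \<alpha> \<Longrightarrow> fc U (inv2 L \<alpha>) = inv2 K (fc U \<alpha>)"
  by (rule K.inv2_eqI[symmetric]) (rule is_inverse2_fc[OF L.is_inverse2_inv2])

lemma equivalence_fm:
  assumes "equivalence L f"
  shows "equivalence K (fm U f)"
proof -
  obtain g \<eta> \<epsilon> where f: "f \<in> Arr L" and g: "g \<in> hom L (tgt L f) (src L f)"
    and \<eta>: "\<eta> \<in> cells L (ide L (src L f)) (cmp L g f)" "invertible2 L \<eta>"
    and \<epsilon>: "\<epsilon> \<in> cells L (cmp L f g) (ide L (tgt L f))" "invertible2 L \<epsilon>"
    using assms unfolding equivalence_def by blast
  have "fm U g \<in> hom K (tgt K (fm U f)) (src K (fm U f))"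
    "fc U \<eta> \<in> cells K (ide K (src K (fm U f))) (cmp K (fm U g) (fm U f))"
    "fc U \<epsilon> \<in> cells K (cmp K (fm U f) (fm U g)) (ide K (tgt K (fm U f)))"
    using f g \<eta>(1) \<epsilon>(1) L.src_in_Obj L.tgt_in_Obj unfolding hom_def cells_def by auto
  then show ?thesis
    using f \<eta>(2) \<epsilon>(2) invertible2_fc unfolding equivalence_def by auto
qed

lemma injective_equivalence_fm:
  assumes "injective_equivalence L f"
  shows "injective_equivalence K (fm U f)"
proof -
  obtain r where f: "equivalence L f" and r: "r \<in> hom L (tgt L f) (src L f)" "cmp L r f = ide L (src L f)"
    using assms unfolding injective_equivalence_def by blast
  have "f \<in> Arr L"
    using f unfolding equivalence_def by blast
  then have "fm U r \<in> hom K (tgt K (fm U f)) (src K (fm U f))"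
    "cmp K (fm U r) (fm U f) = ide K (src K (fm U f))"
    using r fm_cmp[of f r] L.src_in_Obj unfolding hom_def by auto
  then show ?thesis
    using equivalence_fm[OF f] unfolding injective_equivalence_def by blast
qed

lemma retract_equivalence_fm:
  assumes "retract_equivalence L f"
  shows "retract_equivalence K (fm U f)"
proof -
  obtain s where f: "equivalence L f" and s: "s \<in> hom L (tgt L f) (src L f)" "cmp L f s = ide L (tgt L f)"
    using assms unfolding retract_equivalence_def by blast
  have "f \<in> Arr L"
    using f unfolding equivalence_def by blast
  then have "fm U s \<in> hom K (tgt K (fm U f)) (src K (fm U f))"
    "cmp K (fm U f) (fm U s) = ide K (tgt K (fm U f))"
    using s fm_cmp[of s f] L.tgt_in_Obj unfolding hom_def by auto
  then show ?thesis
    using equivalence_fm[OF f] unfolding retract_equivalence_def by blast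
qed

end

locale preserved_arrow_pseudolimit =
  two_fun L K U + L: arrow_pseudolimit L f P u v lam +
  K: arrow_pseudolimit K "fm U f" "fo U P" "fm U u" "fm U v" "fc U lam"
  for L :: "('o1, 'm1, 'c1, 'x) twocat_scheme" and K :: "('o2, 'm2, 'c2, 'y) twocat_scheme"
    and U :: "('o1, 'm1, 'c1, 'o2, 'm2, 'c2, 'z) twofun_scheme"
    and f :: 'm1 and P :: 'o1 and u v :: 'm1 and lam :: 'c1
begin

lemma generic_lift_fc:
  assumes "L.generic_lift a"
  shows "K.generic_lift (fc U a)"
  using L.generic_liftD[OF assms] L.invertible2_lam
  unfolding K.generic_lift_def by (simp add: invertible2_fc fc_inv2 flip: fc_lwhisk)

lemma fm_canonical_section: "fm U L.canonical_section = K.canonical_section"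
proof -
  note i = L.canonical_section
  have A: "src L f \<in> Obj L"
    using L.src_in_Obj by simp
  show ?thesis
    unfolding K.canonical_section_def
  proof (rule K.induced_eqI[symmetric])
    show "fm U L.canonical_section \<in> hom K (src K (fm U f)) (fo U P)"
      using i unfolding hom_def by simp
    show "cmp K (fm U u) (fm U L.canonical_section) = ide K (src K (fm U f))"
      "cmp K (fm U v) (fm U L.canonical_section) = fm U f"
      using i A by (simp_all flip: fm_cmp)
    show "rwhisk K (fc U lam) (fm U L.canonical_section) = inv2 K (idc K (fm U f))"
      using i by (simp flip: fc_rwhisk)
  qed (use A in \<open>simp_all add: hom_def cells_def\<close>)
qed

lemma normal_generic_lift_fc:
  assumes "L.normal_generic_lift a"
  shows "K.normal_generic_lift (fc U a)"
proof -
  have a: "L.generic_lift a" "rwhisk L a L.canonical_section = idc L (ide L (src L f))"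
    using assms unfolding L.normal_generic_lift_def by blast+
  have "rwhisk K (fc U a) K.canonical_section = fc U (rwhisk L a L.canonical_section)"
    using L.generic_liftD[OF a(1)] L.canonical_section by (simp flip: fm_canonical_section)
  also have "\<dots> = idc K (ide K (src K (fm U f)))"
    using a(2) L.src_in_Obj by simp
  finally show ?thesis
    using generic_lift_fc[OF a(1)] unfolding K.normal_generic_lift_def by blast
qed

end

context two_fun
begin

lemma obtain_preserved_arrow_pseudolimit:
  assumes "f \<in> Arr L" "has_pseudolimits_of_arrows L" "preserves_pseudolimits_of_arrows L K U"
  obtains P u v lam where "preserved_arrow_pseudolimit L K U f P u v lam"
proof -
  obtain P u v lam where "pseudolimit L f P u v lam"
    using assms(1,2) unfolding has_pseudolimits_of_arrows_def by blast
  then have "preserved_arrow_pseudolimit L K U f P u v lam"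
    using assms(3) unfolding preserves_pseudolimits_of_arrows_def by unfold_locales blast+
  then show thesis ..
qed

lemma repr_isofibration_fm:
  assumes "has_pseudolimits_of_arrows L" "preserves_pseudolimits_of_arrows L K U"
    and "repr_isofibration L f"
  shows "repr_isofibration K (fm U f)"
proof -
  have "f \<in> Arr L"
    using assms(3) unfolding repr_isofibration_def by blast
  then obtain P u v lam where "preserved_arrow_pseudolimit L K U f P u v lam"
    using assms(1,2) by (rule obtain_preserved_arrow_pseudolimit)
  then interpret preserved_arrow_pseudolimit L K U f P u v lam .
  show ?thesis
    using assms(3) generic_lift_fc
    unfolding L.repr_isofibration_iff_generic_lift K.repr_isofibration_iff_generic_lift by blast
qed

lemma normal_isofibration_fm:
  assumes "has_pseudolimits_of_arrows L" "preserves_pseudolimits_of_arrows L K U"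
    and "normal_isofibration L f"
  shows "normal_isofibration K (fm U f)"
proof -
  have "f \<in> Arr L"
    using assms(3) unfolding normal_isofibration_def repr_isofibration_def by blast
  then obtain P u v lam where "preserved_arrow_pseudolimit L K U f P u v lam"
    using assms(1,2) by (rule obtain_preserved_arrow_pseudolimit)
  then interpret preserved_arrow_pseudolimit L K U f P u v lam .
  show ?thesis
    using assms(3) normal_generic_lift_fc
    unfolding L.normal_isofibration_iff_normal_generic_lift K.normal_isofibration_iff_normal_generic_lift
    by blast
qed

end

theorem proposition3p15:
  fixes L :: "('o1, 'm1, 'c1) twocat"
    and K :: "('o2, 'm2, 'c2) twocat"
    and U :: "('o1, 'm1, 'c1, 'o2, 'm2, 'c2) twofun"
  assumes "two_category L" and "two_category K"
    and "has_pseudolimits_of_arrows L" and "has_pseudolimits_of_arrows K"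
    and "two_functor L K U"
    and "preserves_pseudolimits_of_arrows L K U"
  shows "\<forall>f \<in> Arr L.
           (equivalence L f \<longrightarrow> equivalence K (fm U f)) \<and>
           (injective_equivalence L f \<longrightarrow> injective_equivalence K (fm U f)) \<and>
           (retract_equivalence L f \<longrightarrow> retract_equivalence K (fm U f)) \<and>
           (normal_retract_equivalence L f \<longrightarrow> normal_retract_equivalence K (fm U f)) \<and>
           (repr_isofibration L f \<longrightarrow> repr_isofibration K (fm U f)) \<and>
           (normal_isofibration L f \<longrightarrow> normal_isofibration K (fm U f))"
proof -
  interpret two_fun L K U
    by unfold_locales (fact assms(5))
  note isofibration_fm = repr_isofibration_fm[OF assms(3,6)] normal_isofibration_fm[OF assms(3,6)]
  show ?thesis
    using equivalence_fm injective_equivalence_fm retract_equivalence_fm isofibration_fm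
    unfolding normal_retract_equivalence_def by blast
qed

end
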